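(* Let $H$ be a real Hilbert space, $A:H\to H$ bounded linear, $f\in H$ such that $Au=f$ is solvable, and $y$ the minimal-norm solution ($Ay=f$, $y\perp\mathcal N(A)$). Let $P:H\to H$ be bounded linear with $T:=PA$ selfadjoint, $T\ge0$, and $\mathcal N(T)=\mathcal N(A)$. Let $h>0$ be a constant with $h\|T\|<2$, and $u_0\in H$ with $u_0-y\perp\mathcal N(A)$. For $\delta>0$ let $f_\delta\in H$ with $\|f_\delta-f\|\le\delta$, and define $$u_{n+1}=u_n-hP(Au_n-f_\delta),\quad n\ge0,$$ starting from $u_0$ (the iterates depend on $\delta$). If positive integers $n_\delta$ satisfy $\lim_{\delta\to0}n_\delta h=\infty$ and $\lim_{\delta\to0}n_\delta h\delta=0$, then $\lim_{\delta\to0}\|u_{n_\delta}-y\|=0$. In particular this holds for $n_\delta=C/(h\delta^{\gamma})$ (rounded to an integer) with constants $C>0$, $\gamma\in(0,1)$.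
   Context: $\mathcal N(A)=\{u\in H:Au=0\}$. *)

theory Defs
  imports "HOL-Analysis.Analysis"
begin

definition null_space :: "('a::real_vector \<Rightarrow> 'b::real_vector) \<Rightarrow> 'a set" where
  "null_space A = {u. A u = 0}"

primrec lw_iter :: "('a::real_vector \<Rightarrow> 'a) \<Rightarrow> ('a \<Rightarrow> 'a) \<Rightarrow> real \<Rightarrow> 'a \<Rightarrow> 'a \<Rightarrow> nat \<Rightarrow> 'a" where
  "lw_iter P A h g u0 0 = u0"
| "lw_iter P A h g u0 (Suc n) =
     lw_iter P A h g u0 n - h *\<^sub>R P (A (lw_iter P A h g u0 n) - g)"

end

theory Submission imports Defs begin

(*
  Write M = h PA.  By hypothesis M is selfadjoint, nonnegative and norm(M) <= c < 2, so the
  step operator S = I - M satisfies the energy inequality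
      norm x ^ 2 - norm (S x) ^ 2 >= (2/c - 1) norm (M x) ^ 2,
  which rests on the inequality norm (M x) ^ 2 <= c <M x, x> for nonnegative operators.
  For x orthogonal to the null space of M the iterates S^n x tend to 0: the squared norms
  decrease to a limit L, the identity <S^(2m) x, S^(2n) x> = norm (S^(m+n) x) ^ 2 makes the
  even iterates a Cauchy sequence, their limit z satisfies M z = 0 and is orthogonal to the
  null space of M, hence z = 0 and L = 0.

  It then treats the iteration: with exact data the
  error is u_n - y = S^n (u_0 - y); noisy data perturb the n-th iterate by at most
  n h norm(P) delta, since S is nonexpansive.  A triangle inequality gives convergence of the
  stopped iterates whenever n_delta h tends to infinity and n_delta h delta tends to 0, and the
  rule n_delta = C / (h delta^gamma) is checked to be admissible.
*)

lemma tendsto_zero_if_norm_sq_tendsto_zero: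
  fixes g :: "'b \<Rightarrow> 'a::real_normed_vector"
  assumes "((\<lambda>x. (norm (g x))\<^sup>2) \<longlongrightarrow> 0) F"
  shows "(g \<longlongrightarrow> 0) F"
proof -
  have "((\<lambda>x. sqrt ((norm (g x))\<^sup>2)) \<longlongrightarrow> sqrt 0) F"
    by (rule tendsto_real_sqrt[OF assms])
  then show ?thesis by (simp add: tendsto_norm_zero_iff)
qed


section \<open>Nonnegative selfadjoint operators of norm less than two\<close>

text \<open>The operator M plays the role of h PA; c is a bound for its norm.\<close>
locale landweber_operator =
  fixes M :: "'a::{real_inner, complete_space} \<Rightarrow> 'a" and c :: real
  assumes linear: "bounded_linear M"
    and selfadjoint: "\<And>u v. inner (M u) v = inner u (M v)"
    and nonneg: "\<And>u. 0 \<le> inner (M u) u"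
    and bound: "\<And>u. norm (M u) \<le> c * norm u"
    and c_pos: "0 < c"
    and c_less_2: "c < 2"
begin

text \<open>For a nonnegative operator the image norm is controlled by the quadratic form.
  Proof: expand the nonnegativity of the form at x - (1/c) M x.\<close>
lemma norm_sq_le_quadratic_form: "(norm (M x))\<^sup>2 \<le> c * inner (M x) x"
proof -
  interpret M: bounded_linear M by (rule linear)
  define y where "y = M x"
  have form_y: "inner (M y) y \<le> c * (norm y)\<^sup>2"
  proof -
    have "inner (M y) y \<le> norm (M y) * norm y" by (rule norm_cauchy_schwarz)
    also have "\<dots> \<le> c * norm y * norm y" using bound by (simp add: mult_right_mono)
    finally show ?thesis by (simp add: power2_eq_square mult.assoc)
  qed
  define t where "t = 1 / c"
  have My_x: "inner (M y) x = inner y y"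
    using selfadjoint[of y x] by (simp add: y_def)
  have "0 \<le> inner (M (x - t *\<^sub>R y)) (x - t *\<^sub>R y)" by (rule nonneg)
  also have "\<dots> = inner (M x) x - 2 * t * inner y y + t\<^sup>2 * inner (M y) y"
    using My_x by (simp add: M.diff M.scale y_def power2_eq_square algebra_simps)
  also have "\<dots> \<le> inner (M x) x - 2 * t * (norm y)\<^sup>2 + t\<^sup>2 * (c * (norm y)\<^sup>2)"
    using form_y by (simp add: mult_left_mono power2_norm_eq_inner)
  also have "\<dots> = inner (M x) x - (norm y)\<^sup>2 / c"
    using c_pos by (simp add: t_def power2_eq_square field_simps)
  finally show ?thesis using c_pos by (simp add: y_def field_simps)
qed

definition step :: "'a \<Rightarrow> 'a" where
  "step x = x - M x"

lemma energy_factor_pos: "0 < 2 / c - 1"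
  using c_pos c_less_2 by (simp add: field_simps)

lemma step_energy: "(2 / c - 1) * (norm (M x))\<^sup>2 \<le> (norm x)\<^sup>2 - (norm (step x))\<^sup>2"
proof -
  have "(norm (step x))\<^sup>2 = (norm x)\<^sup>2 - 2 * inner (M x) x + (norm (M x))\<^sup>2"
    using dot_norm_neg[of x "M x"] by (simp add: step_def inner_commute)
  moreover have "(norm (M x))\<^sup>2 / c \<le> inner (M x) x"
    using norm_sq_le_quadratic_form c_pos by (simp add: field_simps)
  ultimately show ?thesis by (simp add: algebra_simps)
qed

lemma step_nonexpansive: "norm (step x) \<le> norm x"
proof -
  have "0 \<le> (2 / c - 1) * (norm (M x))\<^sup>2" using energy_factor_pos by simp
  then have "(norm (step x))\<^sup>2 \<le> (norm x)\<^sup>2" using step_energy[of x] by linarith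
  then show ?thesis by (simp add: power2_le_iff_abs_le)
qed

lemma step_selfadjoint: "inner (step u) v = inner u (step v)"
  unfolding step_def by (simp add: inner_diff_left inner_diff_right selfadjoint)

text \<open>The step preserves orthogonality to the null space of M, since M is selfadjoint.\<close>
lemma iterate_orthogonal:
  assumes "\<forall>z \<in> null_space M. inner x z = 0"
  shows "\<forall>z \<in> null_space M. inner ((step ^^ n) x) z = 0"
proof (induction n)
  case 0 then show ?case using assms by simp
next
  case (Suc n)
  have "inner (M u) z = 0" if "z \<in> null_space M" for u z
    using that selfadjoint[of u z] by (simp add: null_space_def)
  then show ?case using Suc.IH by (simp add: step_def inner_diff_left)
qed

lemma iterate_inner_shift:
  "inner ((step ^^ (m + k)) x) ((step ^^ n) x) = inner ((step ^^ m) x) ((step ^^ (n + k)) x)"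
proof (induction k arbitrary: m n)
  case 0 then show ?case by simp
next
  case (Suc k)
  have "inner ((step ^^ (m + Suc k)) x) ((step ^^ n) x)
      = inner ((step ^^ (Suc m + k)) x) ((step ^^ n) x)" by simp
  also have "\<dots> = inner ((step ^^ Suc m) x) ((step ^^ (n + k)) x)" by (rule Suc.IH)
  also have "\<dots> = inner ((step ^^ m) x) ((step ^^ (n + Suc k)) x)" by (simp add: step_selfadjoint)
  finally show ?case .
qed

lemma iterate_inner_even:
  "inner ((step ^^ (2 * m)) x) ((step ^^ (2 * n)) x) = (norm ((step ^^ (m + n)) x))\<^sup>2"
proof -
  have shifted: "inner ((step ^^ (2 * i)) x) ((step ^^ (2 * j)) x) = (norm ((step ^^ (i + j)) x))\<^sup>2"
    if "i \<le> j" for i j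
  proof -
    have "inner ((step ^^ (2 * i + (j - i))) x) ((step ^^ (i + j)) x)
        = inner ((step ^^ (2 * i)) x) ((step ^^ (i + j + (j - i))) x)"
      by (rule iterate_inner_shift)
    moreover have "2 * i + (j - i) = i + j" "i + j + (j - i) = 2 * j" using that by auto
    ultimately show ?thesis by (simp add: power2_norm_eq_inner)
  qed
  show ?thesis
  proof (cases "m \<le> n")
    case True then show ?thesis by (rule shifted)
  next
    case False then show ?thesis
      using shifted[of n m] by (simp add: inner_commute add.commute)
  qed
qed

lemma norm_sq_iterates_convergent: "\<exists>L. (\<lambda>n. (norm ((step ^^ n) x))\<^sup>2) \<longlonglongrightarrow> L"
proof -
  have "decseq (\<lambda>n. (norm ((step ^^ n) x))\<^sup>2)"
    unfolding decseq_Suc_iff using step_nonexpansive by (simp add: power_mono)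
  moreover have "\<forall>i. 0 \<le> (norm ((step ^^ i) x))\<^sup>2" by simp
  ultimately show ?thesis using decseq_convergent by blast
qed

text \<open>With b n = norm (S^n x) ^ 2 the previous lemmas give
  norm (S^(2m) x - S^(2n) x) ^ 2 = b(2m) + b(2n) - 2 b(m+n), which is small for large m, n
  because b converges.\<close>
lemma even_iterates_Cauchy: "Cauchy (\<lambda>n. (step ^^ (2 * n)) x)"
proof (rule CauchyI)
  fix e :: real assume e: "0 < e"
  define b where "b n = (norm ((step ^^ n) x))\<^sup>2" for n
  obtain L where "b \<longlonglongrightarrow> L" using norm_sq_iterates_convergent unfolding b_def by blast
  moreover have "0 < e\<^sup>2 / 4" using e by simp
  ultimately obtain N where N: "\<forall>k\<ge>N. \<bar>b k - L\<bar> < e\<^sup>2 / 4"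
    unfolding lim_sequentially dist_real_def by blast
  have "norm ((step ^^ (2 * m)) x - (step ^^ (2 * n)) x) < e" if "N \<le> m" "N \<le> n" for m n
  proof -
    have "(norm ((step ^^ (2 * m)) x - (step ^^ (2 * n)) x))\<^sup>2 = b (2 * m) + b (2 * n) - 2 * b (m + n)"
      using dot_norm_neg[of "(step ^^ (2 * m)) x" "(step ^^ (2 * n)) x"] iterate_inner_even[of m x n]
      by (simp add: b_def)
    also have "\<dots> < e\<^sup>2"
    proof -
      have "\<bar>b (2 * m) - L\<bar> < e\<^sup>2 / 4" "\<bar>b (2 * n) - L\<bar> < e\<^sup>2 / 4" "\<bar>b (m + n) - L\<bar> < e\<^sup>2 / 4"
        using N that by auto
      then show ?thesis by linarith
    qed
    finally show ?thesis using e by (simp add: power_less_imp_less_base)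
  qed
  then show "\<exists>K. \<forall>m\<ge>K. \<forall>n\<ge>K. norm ((step ^^ (2 * m)) x - (step ^^ (2 * n)) x) < e" by blast
qed

text \<open>The residuals vanish: summing the energy inequality telescopes.\<close>
lemma residual_iterates_tendsto_zero: "(\<lambda>n. M ((step ^^ n) x)) \<longlonglongrightarrow> 0"
proof -
  define b where "b n = (norm ((step ^^ n) x))\<^sup>2" for n
  obtain L where bL: "b \<longlonglongrightarrow> L" using norm_sq_iterates_convergent unfolding b_def by blast
  have "(\<lambda>n. (norm (M ((step ^^ n) x)))\<^sup>2) \<longlonglongrightarrow> 0"
  proof (rule tendsto_sandwich[of "\<lambda>_. 0" _ _ "\<lambda>n. (b n - b (Suc n)) / (2 / c - 1)"])
    show "\<forall>\<^sub>F n in sequentially. (norm (M ((step ^^ n) x)))\<^sup>2 \<le> (b n - b (Suc n)) / (2 / c - 1)"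
      using step_energy energy_factor_pos by (simp add: b_def pos_le_divide_eq mult.commute)
    have "(\<lambda>n. (b n - b (Suc n)) / (2 / c - 1)) \<longlonglongrightarrow> (L - L) / (2 / c - 1)"
      by (intro tendsto_intros bL LIMSEQ_Suc[OF bL]) (use energy_factor_pos in linarith)
    then show "(\<lambda>n. (b n - b (Suc n)) / (2 / c - 1)) \<longlonglongrightarrow> 0" by simp
  qed auto
  then show ?thesis by (rule tendsto_zero_if_norm_sq_tendsto_zero)
qed

theorem iterates_tendsto_zero:
  assumes x_perp: "\<forall>z \<in> null_space M. inner x z = 0"
  shows "(\<lambda>n. (step ^^ n) x) \<longlonglongrightarrow> 0"
proof -
  define b where "b n = (norm ((step ^^ n) x))\<^sup>2" for n
  obtain L where bL: "b \<longlonglongrightarrow> L" using norm_sq_iterates_convergent unfolding b_def by blast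
  obtain z where z: "(\<lambda>n. (step ^^ (2 * n)) x) \<longlonglongrightarrow> z"
    using even_iterates_Cauchy unfolding Cauchy_convergent_iff convergent_def by blast
  have sub: "strict_mono (\<lambda>n::nat. 2 * n)" by (simp add: strict_mono_def)
  have "(\<lambda>n. M ((step ^^ (2 * n)) x)) \<longlonglongrightarrow> M z"
    using bounded_linear.tendsto[OF linear z] .
  moreover have "(\<lambda>n. M ((step ^^ (2 * n)) x)) \<longlonglongrightarrow> 0"
    using LIMSEQ_subseq_LIMSEQ[OF residual_iterates_tendsto_zero sub] by (simp add: o_def)
  ultimately have "M z = 0" by (rule LIMSEQ_unique)
  then have z_null: "z \<in> null_space M" by (simp add: null_space_def)
  have "(\<lambda>n. inner ((step ^^ (2 * n)) x) z) \<longlonglongrightarrow> inner z z"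
    by (intro tendsto_inner z tendsto_const)
  moreover have "(\<lambda>n. inner ((step ^^ (2 * n)) x) z) = (\<lambda>n. 0)"
    using iterate_orthogonal[OF x_perp] z_null by blast
  ultimately have "(\<lambda>n. 0) \<longlonglongrightarrow> inner z z" by simp
  then have "0 = inner z z" by (rule LIMSEQ_unique[OF tendsto_const])
  then have "z = 0" by simp
  have "(\<lambda>n. b (2 * n)) \<longlonglongrightarrow> (norm z)\<^sup>2" unfolding b_def by (intro tendsto_intros z)
  moreover have "(\<lambda>n. b (2 * n)) \<longlonglongrightarrow> L" using LIMSEQ_subseq_LIMSEQ[OF bL sub] by (simp add: o_def)
  ultimately have "(norm z)\<^sup>2 = L" by (rule LIMSEQ_unique)
  then have "L = 0" using \<open>z = 0\<close> by simp
  then have "(\<lambda>n. (norm ((step ^^ n) x))\<^sup>2) \<longlonglongrightarrow> 0" using bL by (simp add: b_def[abs_def])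
  then show ?thesis by (rule tendsto_zero_if_norm_sq_tendsto_zero)
qed

end

lemma scaled_landweber_operator:
  fixes T :: "'a::{real_inner, complete_space} \<Rightarrow> 'a"
  assumes T_lin: "bounded_linear T"
    and T_sa: "\<And>u v. inner (T u) v = inner u (T v)"
    and T_nonneg: "\<And>u. 0 \<le> inner (T u) u"
    and h_pos: "0 < h"
    and h_norm: "h * onorm T < 2"
  shows "landweber_operator (\<lambda>x. h *\<^sub>R T x) ((h * onorm T + 2) / 2)"
proof (rule landweber_operator.intro)
  show "bounded_linear (\<lambda>x. h *\<^sub>R T x)" by (rule bounded_linear_const_scaleR[OF T_lin])
  have "0 \<le> h * onorm T" using onorm_pos_le[OF T_lin] h_pos by simp
  then show "0 < (h * onorm T + 2) / 2" "(h * onorm T + 2) / 2 < 2" using h_norm by auto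
  show "norm (h *\<^sub>R T u) \<le> (h * onorm T + 2) / 2 * norm u" for u
  proof -
    have "norm (h *\<^sub>R T u) \<le> h * (onorm T * norm u)"
      using onorm[OF T_lin] h_pos by (simp add: mult_left_mono)
    also have "\<dots> \<le> (h * onorm T + 2) / 2 * norm u"
      using mult_right_mono[of "h * onorm T" "(h * onorm T + 2) / 2" "norm u"] h_norm by simp
    finally show ?thesis .
  qed
qed (use T_sa T_nonneg h_pos in simp_all)


section \<open>The Landweber iteration\<close>

lemma lw_iter_error:
  assumes A_lin: "bounded_linear A" and y_sol: "A y = f"
  shows "lw_iter P A h f u0 n - y = ((\<lambda>x. x - h *\<^sub>R P (A x)) ^^ n) (u0 - y)"
proof (induction n)
  case 0 then show ?case by simp
next
  case (Suc n)
  interpret A: bounded_linear A by (rule A_lin)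
  have "A (lw_iter P A h f u0 n) - f = A (lw_iter P A h f u0 n - y)"
    using y_sol by (simp add: A.diff)
  then show ?case using Suc.IH by (simp add: algebra_simps)
qed

lemma lw_iter_data_perturbation:
  assumes A_lin: "bounded_linear A" and P_lin: "bounded_linear P" and h_nonneg: "0 \<le> h"
    and nonexpansive: "\<And>x. norm (x - h *\<^sub>R P (A x)) \<le> norm x"
  shows "norm (lw_iter P A h g u0 n - lw_iter P A h f u0 n) \<le> real n * h * onorm P * norm (g - f)"
proof (induction n)
  case 0 then show ?case by simp
next
  case (Suc n)
  interpret A: bounded_linear A by (rule A_lin)
  interpret P: bounded_linear P by (rule P_lin)
  define D where "D = lw_iter P A h g u0 n - lw_iter P A h f u0 n"
  have "lw_iter P A h g u0 (Suc n) - lw_iter P A h f u0 (Suc n)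
      = (D - h *\<^sub>R P (A D)) + h *\<^sub>R P (g - f)"
    unfolding D_def by (simp add: A.diff P.diff algebra_simps)
  also have "norm \<dots> \<le> norm (D - h *\<^sub>R P (A D)) + norm (h *\<^sub>R P (g - f))"
    by (rule norm_triangle_ineq)
  also have "\<dots> \<le> norm D + h * (onorm P * norm (g - f))"
    using nonexpansive[of D] mult_left_mono[OF onorm[OF P_lin, of "g - f"] h_nonneg] h_nonneg
    by simp
  also have "\<dots> \<le> real (Suc n) * h * onorm P * norm (g - f)"
    using Suc.IH unfolding D_def by (simp add: algebra_simps)
  finally show ?case .
qed


section \<open>Stopping rules\<close>

lemma filterlim_nat_of_scaled:
  fixes nd :: "'b \<Rightarrow> nat"
  assumes "filterlim (\<lambda>\<delta>. real (nd \<delta>) * h) at_top F" and "0 < h"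
  shows "filterlim nd at_top F"
  unfolding filterlim_at_top
proof
  fix Z :: nat
  have "\<forall>\<^sub>F x in F. real Z * h \<le> real (nd x) * h" using assms(1) unfolding filterlim_at_top by blast
  then show "\<forall>\<^sub>F x in F. Z \<le> nd x" by (rule eventually_mono) (use assms(2) in simp)
qed

lemma stopped_iterates_tendsto:
  fixes v :: "nat \<Rightarrow> 'a::real_normed_vector" and u :: "'b \<Rightarrow> nat \<Rightarrow> 'a"
  assumes exact: "v \<longlonglongrightarrow> y"
    and index: "filterlim nd at_top F"
    and r_zero: "(r \<longlongrightarrow> 0) F"
    and perturbation: "\<forall>\<^sub>F \<delta> in F. norm (u \<delta> (nd \<delta>) - v (nd \<delta>)) \<le> r \<delta>"
  shows "((\<lambda>\<delta>. norm (u \<delta> (nd \<delta>) - y)) \<longlongrightarrow> 0) F"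
proof (rule tendsto_sandwich[of "\<lambda>_. 0" _ _ "\<lambda>\<delta>. norm (v (nd \<delta>) - y) + r \<delta>"])
  show "\<forall>\<^sub>F \<delta> in F. norm (u \<delta> (nd \<delta>) - y) \<le> norm (v (nd \<delta>) - y) + r \<delta>"
    using perturbation
  proof (rule eventually_mono)
    fix \<delta> assume "norm (u \<delta> (nd \<delta>) - v (nd \<delta>)) \<le> r \<delta>"
    moreover have "norm (u \<delta> (nd \<delta>) - y) \<le> norm (v (nd \<delta>) - y) + norm (u \<delta> (nd \<delta>) - v (nd \<delta>))"
      using norm_triangle_ineq[of "v (nd \<delta>) - y" "u \<delta> (nd \<delta>) - v (nd \<delta>)"] by simp
    ultimately show "norm (u \<delta> (nd \<delta>) - y) \<le> norm (v (nd \<delta>) - y) + r \<delta>" by linarith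
  qed
  have "(\<lambda>n. norm (v n - y)) \<longlonglongrightarrow> 0"
    using tendsto_norm[OF tendsto_diff[OF exact tendsto_const[of y]]] by simp
  then have "((\<lambda>\<delta>. norm (v (nd \<delta>) - y)) \<longlongrightarrow> 0) F"
    using index by (rule filterlim_compose)
  then show "((\<lambda>\<delta>. norm (v (nd \<delta>) - y) + r \<delta>) \<longlongrightarrow> 0) F"
    using tendsto_add[OF _ r_zero] by simp
qed auto

lemma lw_iter_stopped_tendsto:
  fixes fd :: "real \<Rightarrow> 'a::real_normed_vector" and nd :: "real \<Rightarrow> nat"
  assumes A_lin: "bounded_linear A" and P_lin: "bounded_linear P" and h_pos: "0 < h"
    and nonexpansive: "\<And>x. norm (x - h *\<^sub>R P (A x)) \<le> norm x"
    and exact: "(\<lambda>n. lw_iter P A h f u0 n) \<longlonglongrightarrow> y"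
    and fd_close: "\<forall>\<delta>>0. norm (fd \<delta> - f) \<le> \<delta>"
    and index: "filterlim (\<lambda>\<delta>. real (nd \<delta>) * h) at_top (at_right 0)"
    and product: "((\<lambda>\<delta>. real (nd \<delta>) * h * \<delta>) \<longlongrightarrow> 0) (at_right 0)"
  shows "((\<lambda>\<delta>. norm (lw_iter P A h (fd \<delta>) u0 (nd \<delta>) - y)) \<longlongrightarrow> 0) (at_right 0)"
proof (rule stopped_iterates_tendsto[OF exact filterlim_nat_of_scaled[OF index h_pos]])
  show "((\<lambda>\<delta>. onorm P * (real (nd \<delta>) * h * \<delta>)) \<longlongrightarrow> 0) (at_right 0)"
    using tendsto_mult_right_zero[OF product] .
  show "\<forall>\<^sub>F \<delta> in at_right 0. norm (lw_iter P A h (fd \<delta>) u0 (nd \<delta>) - lw_iter P A h f u0 (nd \<delta>))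
      \<le> onorm P * (real (nd \<delta>) * h * \<delta>)"
    using eventually_at_right_less[of 0]
  proof (rule eventually_mono)
    fix \<delta> :: real assume "0 < \<delta>"
    have "norm (lw_iter P A h (fd \<delta>) u0 (nd \<delta>) - lw_iter P A h f u0 (nd \<delta>))
        \<le> real (nd \<delta>) * h * onorm P * norm (fd \<delta> - f)"
      using lw_iter_data_perturbation[OF A_lin P_lin _ nonexpansive] h_pos by simp
    also have "\<dots> \<le> real (nd \<delta>) * h * onorm P * \<delta>"
      using fd_close \<open>0 < \<delta>\<close> h_pos onorm_pos_le[OF P_lin] by (simp add: mult_left_mono)
    finally show "norm (lw_iter P A h (fd \<delta>) u0 (nd \<delta>) - lw_iter P A h f u0 (nd \<delta>))
        \<le> onorm P * (real (nd \<delta>) * h * \<delta>)" by (simp add: mult_ac)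
  qed
qed

lemma power_rule_at_top:
  assumes "0 < h" "0 < C" "0 < \<gamma>"
  shows "filterlim (\<lambda>\<delta>. real (nat \<lceil>C / (h * \<delta> powr \<gamma>)\<rceil>) * h) at_top (at_right 0)"
proof (rule filterlim_at_top_mono)
  have ev_pos: "\<forall>\<^sub>F \<delta> in at_right (0::real). 0 < \<delta>" by (rule eventually_at_right_less)
  have "((\<lambda>\<delta>::real. \<delta> powr \<gamma>) \<longlongrightarrow> 0) (at_right 0)"
    by (rule tendsto_zero_powrI[OF tendsto_ident_at tendsto_const])
      (use ev_pos assms in \<open>auto elim: eventually_mono\<close>)
  then show "filterlim (\<lambda>\<delta>::real. C / \<delta> powr \<gamma>) at_top (at_right 0)"
    by (rule LIM_at_top_divide[OF tendsto_const \<open>0 < C\<close>]) (use ev_pos in \<open>auto elim: eventually_mono\<close>)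
  show "\<forall>\<^sub>F \<delta> in at_right 0. C / \<delta> powr \<gamma> \<le> real (nat \<lceil>C / (h * \<delta> powr \<gamma>)\<rceil>) * h"
    using ev_pos
  proof (rule eventually_mono)
    fix \<delta> :: real assume "0 < \<delta>"
    have "C / (h * \<delta> powr \<gamma>) \<le> real (nat \<lceil>C / (h * \<delta> powr \<gamma>)\<rceil>)" by linarith
    then show "C / \<delta> powr \<gamma> \<le> real (nat \<lceil>C / (h * \<delta> powr \<gamma>)\<rceil>) * h"
      using \<open>0 < h\<close> \<open>0 < \<delta>\<close> by (simp add: field_simps)
  qed
qed

lemma power_rule_times_delta:
  assumes "0 < h" "0 < C" "\<gamma> < 1"
  shows "((\<lambda>\<delta>. real (nat \<lceil>C / (h * \<delta> powr \<gamma>)\<rceil>) * h * \<delta>) \<longlongrightarrow> 0) (at_right 0)"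
proof (rule tendsto_sandwich[of "\<lambda>_. 0" _ _ "\<lambda>\<delta>. C * \<delta> powr (1 - \<gamma>) + h * \<delta>"])
  have ev_pos: "\<forall>\<^sub>F \<delta> in at_right (0::real). 0 < \<delta>" by (rule eventually_at_right_less)
  then show "\<forall>\<^sub>F \<delta> in at_right 0. 0 \<le> real (nat \<lceil>C / (h * \<delta> powr \<gamma>)\<rceil>) * h * \<delta>"
    by (rule eventually_mono) (use assms in \<open>intro mult_nonneg_nonneg of_nat_0_le_iff; simp\<close>)
  show "\<forall>\<^sub>F \<delta> in at_right 0. real (nat \<lceil>C / (h * \<delta> powr \<gamma>)\<rceil>) * h * \<delta> \<le> C * \<delta> powr (1 - \<gamma>) + h * \<delta>"
    using ev_pos
  proof (rule eventually_mono)
    fix \<delta> :: real assume "0 < \<delta>"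
    have "real (nat \<lceil>C / (h * \<delta> powr \<gamma>)\<rceil>) \<le> C / (h * \<delta> powr \<gamma>) + 1"
      using assms \<open>0 < \<delta>\<close> by (simp add: less_imp_le)
    then have "real (nat \<lceil>C / (h * \<delta> powr \<gamma>)\<rceil>) * h * \<delta> \<le> (C / (h * \<delta> powr \<gamma>) + 1) * h * \<delta>"
      using assms \<open>0 < \<delta>\<close> by (simp add: mult_right_mono)
    also have "\<dots> = C * (\<delta> / \<delta> powr \<gamma>) + h * \<delta>" using assms \<open>0 < \<delta>\<close> by (simp add: field_simps)
    also have "\<delta> / \<delta> powr \<gamma> = \<delta> powr (1 - \<gamma>)" using \<open>0 < \<delta>\<close> by (simp add: powr_diff)
    finally show "real (nat \<lceil>C / (h * \<delta> powr \<gamma>)\<rceil>) * h * \<delta> \<le> C * \<delta> powr (1 - \<gamma>) + h * \<delta>" .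
  qed
  have "((\<lambda>\<delta>::real. \<delta> powr (1 - \<gamma>)) \<longlongrightarrow> 0) (at_right 0)"
    by (rule tendsto_zero_powrI[OF tendsto_ident_at tendsto_const])
      (use ev_pos assms in \<open>auto elim: eventually_mono\<close>)
  then have "((\<lambda>\<delta>. C * \<delta> powr (1 - \<gamma>) + h * \<delta>) \<longlongrightarrow> C * 0 + h * 0) (at_right 0)"
    by (intro tendsto_intros tendsto_ident_at)
  then show "((\<lambda>\<delta>. C * \<delta> powr (1 - \<gamma>) + h * \<delta>) \<longlongrightarrow> 0) (at_right 0)" by simp
qed simp


theorem theorem4:
  fixes A P :: "'a::{real_inner, complete_space} \<Rightarrow> 'a"
    and f y u0 :: 'a and h :: real and fd :: "real \<Rightarrow> 'a"
  assumes A_lin: "bounded_linear A"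
    and P_lin: "bounded_linear P"
    and y_sol: "A y = f"
    and y_perp: "\<forall>z \<in> null_space A. inner y z = 0"
    and T_sa: "\<forall>u v. inner (P (A u)) v = inner u (P (A v))"
    and T_nonneg: "\<forall>u. 0 \<le> inner (P (A u)) u"
    and T_null: "null_space (P \<circ> A) = null_space A"
    and h_pos: "h > 0"
    and h_norm: "h * onorm (P \<circ> A) < 2"
    and u0_perp: "\<forall>z \<in> null_space A. inner (u0 - y) z = 0"
    and fd_close: "\<forall>\<delta>>0. norm (fd \<delta> - f) \<le> \<delta>"
  shows "(\<forall>nd :: real \<Rightarrow> nat.
            (\<forall>\<delta>>0. nd \<delta> > 0) \<and>
            filterlim (\<lambda>\<delta>. real (nd \<delta>) * h) at_top (at_right 0) \<and>
            ((\<lambda>\<delta>. real (nd \<delta>) * h * \<delta>) \<longlongrightarrow> 0) (at_right 0)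
          \<longrightarrow> ((\<lambda>\<delta>. norm (lw_iter P A h (fd \<delta>) u0 (nd \<delta>) - y)) \<longlongrightarrow> 0) (at_right 0))
       \<and> (\<forall>C \<gamma>. C > 0 \<and> 0 < \<gamma> \<and> \<gamma> < 1 \<longrightarrow>
            ((\<lambda>\<delta>. norm (lw_iter P A h (fd \<delta>) u0 (nat \<lceil>C / (h * \<delta> powr \<gamma>)\<rceil>) - y))
               \<longlongrightarrow> 0) (at_right 0))"
proof -
  let ?c = "(h * onorm (P \<circ> A) + 2) / 2"
  interpret landweber_operator "\<lambda>x. h *\<^sub>R P (A x)" ?c
    using scaled_landweber_operator[of "P \<circ> A" h] bounded_linear_compose[OF P_lin A_lin]
      T_sa T_nonneg h_pos h_norm by (simp add: o_def)
  have null_M: "null_space (\<lambda>x. h *\<^sub>R P (A x)) = null_space A"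
    using T_null h_pos by (auto simp: null_space_def)
  have exact: "(\<lambda>n. lw_iter P A h f u0 n) \<longlonglongrightarrow> y"
  proof -
    have "(\<lambda>n. (step ^^ n) (u0 - y)) \<longlonglongrightarrow> 0"
      using iterates_tendsto_zero[of "u0 - y"] u0_perp null_M by simp
    then have "(\<lambda>n. lw_iter P A h f u0 n - y) \<longlonglongrightarrow> 0"
      using lw_iter_error[OF A_lin y_sol] by (simp add: step_def[abs_def])
    then show ?thesis by (simp only: LIM_zero_iff)
  qed
  have nonexpansive: "norm (x - h *\<^sub>R P (A x)) \<le> norm x" for x
    using step_nonexpansive[of x] by (simp add: step_def)
  have stopped: "((\<lambda>\<delta>. norm (lw_iter P A h (fd \<delta>) u0 (nd \<delta>) - y)) \<longlongrightarrow> 0) (at_right 0)"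
    if "filterlim (\<lambda>\<delta>. real (nd \<delta>) * h) at_top (at_right 0)"
      and "((\<lambda>\<delta>. real (nd \<delta>) * h * \<delta>) \<longlongrightarrow> 0) (at_right 0)" for nd
    using lw_iter_stopped_tendsto[OF A_lin P_lin h_pos nonexpansive exact fd_close that] .
  moreover have "((\<lambda>\<delta>. norm (lw_iter P A h (fd \<delta>) u0 (nat \<lceil>C / (h * \<delta> powr \<gamma>)\<rceil>) - y)) \<longlongrightarrow> 0) (at_right 0)"
    if "C > 0" "0 < \<gamma>" "\<gamma> < 1" for C \<gamma>
    using stopped[OF power_rule_at_top power_rule_times_delta] h_pos that by blast
  ultimately show ?thesis by blast
qed

end
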